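(* Even for two teams with identical valuations and nonnegative-value players, there does not necessarily exist an allocation that is both EF1 and player-Pareto optimal.
   Context: Setting: teams $T=[n]$, players $P=\{p_1,\dots,p_m\}$. Each player $p$ has a complete, transitive weak preference $\succsim_p$ over $T$. Each team $i$ has an additive valuation $v_i:2^P\to\mathbb{R}$, $v_i(S)=\sum_{p\in S}v_i(p)$; nonnegative-value players means $v_i(p)\ge0$ for all $i,p$; identical valuations means $v_1=v_2=\dots=v_n$. An allocation is an ordered partition $(A_1,\dots,A_n)$ of $P$. $A$ is EF1 if for all distinct $i,j$ there are $X\subseteq A_i$, $Y\subseteq A_j$ with $|X\cup Y|\le1$ and $v_i(A_i\setminus X)\ge v_i(A_j\setminus Y)$. A player is better (worse) off in $A'$ than in $A$ if she strictly prefers (strictly disprefers) her team in $A'$ to her team in $A$. $A$ is player-Pareto dominated by $A'$ if no player is worse off and at least one player is better off; $A$ is player-Pareto optimal (player-PO) if it is not player-Pareto dominated by any allocation. *)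

theory Defs
  imports Complex_Main
begin

text \<open>Teams are 0,...,n-1 (the paper's [n] shifted by one); players form a finite set P.
  pref p i j means: player p weakly prefers team i to team j.
  v i p is the value of player p for team i; v i S = sum of v i over S.\<close>

definition weak_pref_profile :: "nat \<Rightarrow> 'p set \<Rightarrow> ('p \<Rightarrow> nat \<Rightarrow> nat \<Rightarrow> bool) \<Rightarrow> bool" where
  "weak_pref_profile n P pref \<longleftrightarrow>
     (\<forall>p\<in>P. (\<forall>i<n. \<forall>j<n. pref p i j \<or> pref p j i) \<and>
             (\<forall>i<n. \<forall>j<n. \<forall>k<n. pref p i j \<longrightarrow> pref p j k \<longrightarrow> pref p i k))"

definition strict_pref :: "('p \<Rightarrow> nat \<Rightarrow> nat \<Rightarrow> bool) \<Rightarrow> 'p \<Rightarrow> nat \<Rightarrow> nat \<Rightarrow> bool" where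
  "strict_pref pref p i j \<longleftrightarrow> pref p i j \<and> \<not> pref p j i"

definition is_allocation :: "nat \<Rightarrow> 'p set \<Rightarrow> (nat \<Rightarrow> 'p set) \<Rightarrow> bool" where
  "is_allocation n P A \<longleftrightarrow>
     (\<forall>i<n. A i \<subseteq> P) \<and> (\<forall>p\<in>P. \<exists>!i. i < n \<and> p \<in> A i)"

definition val :: "(nat \<Rightarrow> 'p \<Rightarrow> real) \<Rightarrow> nat \<Rightarrow> 'p set \<Rightarrow> real" where
  "val v i S = (\<Sum>p\<in>S. v i p)"

definition EF1 :: "nat \<Rightarrow> (nat \<Rightarrow> 'p \<Rightarrow> real) \<Rightarrow> (nat \<Rightarrow> 'p set) \<Rightarrow> bool" where
  "EF1 n v A \<longleftrightarrow>
     (\<forall>i<n. \<forall>j<n. i \<noteq> j \<longrightarrow>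
        (\<exists>X Y. X \<subseteq> A i \<and> Y \<subseteq> A j \<and> card (X \<union> Y) \<le> 1 \<and> finite (X \<union> Y) \<and>
               val v i (A i - X) \<ge> val v i (A j - Y)))"

definition better_off :: "nat \<Rightarrow> ('p \<Rightarrow> nat \<Rightarrow> nat \<Rightarrow> bool) \<Rightarrow> (nat \<Rightarrow> 'p set) \<Rightarrow> (nat \<Rightarrow> 'p set) \<Rightarrow> 'p \<Rightarrow> bool" where
  "better_off n pref A' A p \<longleftrightarrow>
     (\<exists>i<n. \<exists>j<n. p \<in> A' i \<and> p \<in> A j \<and> strict_pref pref p i j)"

definition worse_off :: "nat \<Rightarrow> ('p \<Rightarrow> nat \<Rightarrow> nat \<Rightarrow> bool) \<Rightarrow> (nat \<Rightarrow> 'p set) \<Rightarrow> (nat \<Rightarrow> 'p set) \<Rightarrow> 'p \<Rightarrow> bool" where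
  "worse_off n pref A' A p \<longleftrightarrow>
     (\<exists>i<n. \<exists>j<n. p \<in> A' i \<and> p \<in> A j \<and> strict_pref pref p j i)"

definition player_pareto_dominated ::
  "nat \<Rightarrow> 'p set \<Rightarrow> ('p \<Rightarrow> nat \<Rightarrow> nat \<Rightarrow> bool) \<Rightarrow> (nat \<Rightarrow> 'p set) \<Rightarrow> (nat \<Rightarrow> 'p set) \<Rightarrow> bool" where
  "player_pareto_dominated n P pref A A' \<longleftrightarrow>
     (\<forall>p\<in>P. \<not> worse_off n pref A' A p) \<and> (\<exists>p\<in>P. better_off n pref A' A p)"

definition player_PO :: "nat \<Rightarrow> 'p set \<Rightarrow> ('p \<Rightarrow> nat \<Rightarrow> nat \<Rightarrow> bool) \<Rightarrow> (nat \<Rightarrow> 'p set) \<Rightarrow> bool" where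
  "player_PO n P pref A \<longleftrightarrow>
     \<not> (\<exists>A'. is_allocation n P A' \<and> player_pareto_dominated n P pref A A')"

end

theory Submission
  imports Defs
begin

text \<open>Two players, each valued 1 by both teams, who both strictly prefer team 0. Any player
  placed on team 1 could be moved to team 0 without hurting anybody, so a player-Pareto optimal
  allocation gives team 1 nothing; but then team 1 envies team 0 by two positively valued
  players, which removing a single player cannot repair.\<close>

lemma player_PO_unanimous_favourite:
  assumes alloc: "is_allocation n P A" and PO: "player_PO n P pref A" and "t < n"
    and fav: "\<And>p j. p \<in> P \<Longrightarrow> j < n \<Longrightarrow> j \<noteq> t \<Longrightarrow> strict_pref pref p t j"
  shows "A t = P"
proof -
  define A' where "A' = (\<lambda>i. if i = t then P else {})"
  have alloc': "is_allocation n P A'"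
    using \<open>t < n\<close> unfolding is_allocation_def A'_def by auto
  have no_worse: "\<not> worse_off n pref A' A p" if "p \<in> P" for p
    using fav[OF that] unfolding worse_off_def strict_pref_def A'_def
    by (fastforce split: if_splits)
  have only_t: "i = t" if "i < n" "p \<in> A i" for i p
  proof (rule ccontr)
    assume "i \<noteq> t"
    from that alloc have "p \<in> P" unfolding is_allocation_def by blast
    with \<open>i < n\<close> \<open>i \<noteq> t\<close> \<open>t < n\<close> \<open>p \<in> A i\<close> have "better_off n pref A' A p"
      unfolding better_off_def A'_def using fav by fastforce
    with \<open>p \<in> P\<close> no_worse have "player_pareto_dominated n P pref A A'"
      unfolding player_pareto_dominated_def by blast
    with alloc' PO show False unfolding player_PO_def by blast
  qed
  show ?thesis
    using alloc \<open>t < n\<close> only_t unfolding is_allocation_def by blast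
qed

lemma is_allocation_other_bundle_empty:
  assumes "is_allocation n P A" "A t = P" "t < n" "i < n" "i \<noteq> t"
  shows "A i = {}"
proof (rule equals0I)
  fix p assume "p \<in> A i"
  with assms(1,4) have "p \<in> P" unfolding is_allocation_def by blast
  with assms(1) have "\<exists>!k. k < n \<and> p \<in> A k" unfolding is_allocation_def by blast
  moreover from \<open>p \<in> P\<close> assms(2) have "p \<in> A t" by simp
  ultimately show False using \<open>p \<in> A i\<close> assms(3-5) by (metis (no_types, lifting))
qed

lemma EF1_empty_bundle_card_le_1:
  assumes "EF1 n v A" "i < n" "j < n" "i \<noteq> j" and empty: "A i = {}" and "finite (A j)"
    and pos: "\<And>p. p \<in> A j \<Longrightarrow> v i p > 0"
  shows "card (A j) \<le> 1"
proof -
  obtain X Y where "X \<subseteq> A i" "Y \<subseteq> A j" "card (X \<union> Y) \<le> 1"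
    and envy: "val v i (A i - X) \<ge> val v i (A j - Y)"
    using assms(1)[unfolded EF1_def, rule_format, OF assms(2-4)] by blast
  from \<open>X \<subseteq> A i\<close> empty have "X = {}" by blast
  with \<open>card (X \<union> Y) \<le> 1\<close> have "card Y \<le> 1" by simp
  from envy empty have "val v i (A j - Y) \<le> 0" by (simp add: val_def)
  moreover have "val v i (A j - Y) > 0" if "A j - Y \<noteq> {}"
    unfolding val_def using \<open>finite (A j)\<close> that pos by (intro sum_pos) auto
  ultimately have "A j \<subseteq> Y" by (meson Diff_eq_empty_iff not_less)
  with \<open>Y \<subseteq> A j\<close> \<open>card Y \<le> 1\<close> show ?thesis by (simp add: subset_antisym)
qed

theorem proposition5:
  shows "\<exists>(P::nat set) pref (v::nat \<Rightarrow> nat \<Rightarrow> real).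
           finite P \<and> weak_pref_profile 2 P pref \<and>
           (\<forall>i<2. \<forall>p\<in>P. v i p \<ge> 0) \<and>
           (\<forall>i<2. \<forall>p\<in>P. v i p = v 0 p) \<and>
           \<not> (\<exists>A. is_allocation 2 P A \<and> EF1 2 v A \<and> player_PO 2 P pref A)"
proof -
  define P :: "nat set" where "P = {0, 1}"
  define pref :: "nat \<Rightarrow> nat \<Rightarrow> nat \<Rightarrow> bool" where "pref = (\<lambda>p i j. i \<le> j)"
  define v :: "nat \<Rightarrow> nat \<Rightarrow> real" where "v = (\<lambda>i p. 1)"
  have no_fair_PO: False
    if alloc: "is_allocation 2 P A" and "EF1 2 v A" and PO: "player_PO 2 P pref A" for A
  proof -
    have A0: "A 0 = P"
      using player_PO_unanimous_favourite[OF alloc PO]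
      unfolding strict_pref_def pref_def by simp
    then have "A 1 = {}"
      using is_allocation_other_bundle_empty[OF alloc A0, of 1] by simp
    then have "card (A 0) \<le> 1"
      using EF1_empty_bundle_card_le_1[OF \<open>EF1 2 v A\<close>, of 1 0] A0
      unfolding P_def v_def by simp
    with A0 show False unfolding P_def by simp
  qed
  have "weak_pref_profile 2 P pref"
    unfolding weak_pref_profile_def pref_def by auto
  with no_fair_PO show ?thesis
    by (intro exI[of _ P] exI[of _ pref] exI[of _ v]) (auto simp: P_def v_def)
qed

end
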